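(* Let $d\ge5$ and assume (H0) and (H4). Suppose $X_1,\dots,X_n\sim\mu$ i.i.d. and $Y_1,\dots,Y_n\sim\nu$ i.i.d., with the $X$-sample independent of the $Y$-sample. Then there is a constant $c>0$ depending only on $d,\alpha,\mathcal X,\mathcal Y,x_0,y_0$ such that for all $n\ge1$, $$\sup_{\mu\in\mathcal P(\mathcal X),\ \nu\in\mathcal P(\mathcal Y)}\mathbb E_{\mu,\nu}\big|\mathcal T_c(\mu_n,\nu_n)-\mathcal T_c(\mu,\nu)\big|\ge c\,\lambda\,n^{-\alpha/d}.$$
   Context: (H0): $c(x,y)=h(x-y)$, $h:\mathbb R^d\to[0,\infty)$ convex, even, lower semi-continuous. (H4): $\mathcal X,\mathcal Y\subseteq\mathbb R^d$ are convex with nonempty interior, $h$ is differentiable on $\mathcal Z=\mathcal X-\mathcal Y$, and there exist $\lambda>0$, $\alpha\in(0,2]$ and $z_0=x_0-y_0$ with $x_0\in\mathrm{int}(\mathcal X)$, $y_0\in\mathrm{int}(\mathcal Y)$ such that for all $z\in\mathcal Z$: $h(z)-h(z_0)\ge\lambda\|z-z_0\|^\alpha$ if $\alpha\le1$, and $h(z)-h(z_0)\ge\langle\nabla h(z_0),z-z_0\rangle+\lambda\|z-z_0\|^\alpha$ if $\alpha>1$. $\mathcal T_c(\mu,\nu)=\inf_{\pi\in\Pi(\mu,\nu)}\int c\,d\pi$; $\mu_n,\nu_n$ are the empirical measures. *)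

theory Defs
  imports "HOL-Probability.Probability"
begin

definition lsc :: "('a::topological_space \<Rightarrow> real) \<Rightarrow> bool" where
  "lsc f \<longleftrightarrow> (\<forall>x. \<forall>t. t < f x \<longrightarrow> eventually (\<lambda>y. t < f y) (at x))"

definition prob_measures :: "'a::euclidean_space set \<Rightarrow> 'a measure set" where
  "prob_measures S = {\<mu>. sets \<mu> = sets (borel :: 'a measure) \<and> prob_space \<mu> \<and> (AE x in \<mu>. x \<in> S)}"

definition couplings :: "'a::euclidean_space measure \<Rightarrow> 'a measure \<Rightarrow> ('a \<times> 'a) measure set" where
  "couplings \<mu> \<nu> = {\<pi>. sets \<pi> = sets (borel :: ('a \<times> 'a) measure) \<and> prob_space \<pi> \<and>
      distr \<pi> borel fst = \<mu> \<and> distr \<pi> borel snd = \<nu>}"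

definition OT_cost :: "('a::euclidean_space \<Rightarrow> 'a \<Rightarrow> real) \<Rightarrow> 'a measure \<Rightarrow> 'a measure \<Rightarrow> ennreal" where
  "OT_cost c \<mu> \<nu> = (INF \<pi> \<in> couplings \<mu> \<nu>. \<integral>\<^sup>+ p. ennreal (c (fst p) (snd p)) \<partial>\<pi>)"

definition empirical :: "nat \<Rightarrow> (nat \<Rightarrow> 'a::euclidean_space) \<Rightarrow> 'a measure" where
  "empirical n xs = measure_of UNIV (sets (borel :: 'a measure))
      (\<lambda>A. ennreal ((\<Sum>i<n. indicator A (xs i)) / real n))"

text \<open>|a - b| on [0,infinity]; equals infinity if exactly one of them is infinite.\<close>
definition ediff :: "ennreal \<Rightarrow> ennreal \<Rightarrow> ennreal" where
  "ediff a b = (a - b) + (b - a)"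

definition expected_OT_error ::
  "('a::euclidean_space \<Rightarrow> 'a \<Rightarrow> real) \<Rightarrow> nat \<Rightarrow> 'a measure \<Rightarrow> 'a measure \<Rightarrow> ennreal" where
  "expected_OT_error c n \<mu> \<nu> =
     (\<integral>\<^sup>+ \<omega>. ediff (OT_cost c (empirical n (fst \<omega>)) (empirical n (snd \<omega>))) (OT_cost c \<mu> \<nu>)
        \<partial>(PiM {..<n} (\<lambda>_. \<mu>) \<Otimes>\<^sub>M PiM {..<n} (\<lambda>_. \<nu>)))"

end

theory Submission
  imports Defs
begin

text \<open>Let \<open>K\<close> be a grid of at least \<open>2n\<close> points in a ball of radius \<open>r\<close>, with mutual distances
  \<open>s \<ge> c r n^(-1/d)\<close>, and let \<open>mu\<close>, \<open>nu\<close> be the uniform laws on \<open>x0 + K\<close> and \<open>y0 + K\<close>.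
  The diagonal coupling gives \<open>T(mu, nu) \<le> h (x0 - y0)\<close>. For the empirical measures, the growth
  condition makes \<open>A x = h (x0 - y0) + L (x - x0) + lam s^alpha [x unmatched]\<close> and
  \<open>B y = - L (y - y0)\<close> admissible Kantorovich potentials, where \<open>x\<close> is unmatched if
  \<open>x - (x0 - y0)\<close> is not a point of the second sample. The linear terms have mean zero, and since
  two independent uniform draws from \<open>K\<close> coincide with probability \<open>1 / card K \<le> 1 / (2n)\<close>, at
  least half of the sample points are unmatched on average; so the expected error is at least
  \<open>lam s^alpha / 2\<close>.\<close>

lemma sets_borel_finite: "finite (S :: 'a::euclidean_space set) \<Longrightarrow> S \<in> sets borel"
  by (simp add: borel_closed finite_imp_closed)

lemma borel_measurable_fst_snd [measurable]:
  "fst \<in> (borel :: ('a::euclidean_space \<times> 'b::euclidean_space) measure) \<rightarrow>\<^sub>M borel"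
  "snd \<in> (borel :: ('a::euclidean_space \<times> 'b::euclidean_space) measure) \<rightarrow>\<^sub>M borel"
  by (rule borel_measurable_continuous_onI, intro continuous_intros)+

lemma pred_equality_borel [measurable (raw)]:
  fixes f g :: "'b \<Rightarrow> 'a::{second_countable_topology, t2_space}"
  assumes "f \<in> borel_measurable M" "g \<in> borel_measurable M"
  shows "Measurable.pred M (\<lambda>x. f x = g x)"
  using measurable_equality_set[OF assms] by (simp add: pred_def)

lemma ennreal_integral_le_nn_integral:
  fixes f :: "'b \<Rightarrow> real"
  assumes "integrable M f"
  shows "ennreal (integral\<^sup>L M f) \<le> (\<integral>\<^sup>+ x. ennreal (f x) \<partial>M)"
proof -
  have int_pos: "integrable M (\<lambda>x. max 0 (f x))" using assms by auto
  have "ennreal (integral\<^sup>L M f) \<le> ennreal (integral\<^sup>L M (\<lambda>x. max 0 (f x)))"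
    using assms int_pos by (intro ennreal_leI integral_mono) auto
  also have "\<dots> = (\<integral>\<^sup>+ x. ennreal (max 0 (f x)) \<partial>M)"
    using int_pos by (intro nn_integral_eq_integral[symmetric]) auto
  also have "\<dots> = (\<integral>\<^sup>+ x. ennreal (f x) \<partial>M)"
    by (intro nn_integral_cong) (auto simp: max_def ennreal_neg)
  finally show ?thesis .
qed

lemma empirical_eq_distr_pmf_of_set:
  fixes xs :: "nat \<Rightarrow> 'a::euclidean_space"
  assumes "n \<ge> 1"
  shows "empirical n xs = distr (measure_pmf (pmf_of_set {..<n})) borel xs"
proof -
  let ?N = "distr (measure_pmf (pmf_of_set {..<n})) borel xs"
  have ne: "{..<n} \<noteq> {}" using assms by (auto simp: lessThan_empty_iff)
  have "empirical n xs = measure_of UNIV (sets borel) (emeasure ?N)"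
    unfolding empirical_def
  proof (rule measure_of_eq)
    fix A assume "A \<in> sigma_sets UNIV (sets (borel :: 'a measure))"
    hence A: "A \<in> sets borel" by (metis sets.sigma_sets_eq space_borel)
    have "emeasure ?N A = emeasure (measure_pmf (pmf_of_set {..<n})) (xs -` A)"
      using A by (subst emeasure_distr) (auto simp: measurable_pmf_measure1)
    also have "\<dots> = ennreal (real (card ({..<n} \<inter> xs -` A)) / real n)"
      using ne by (subst emeasure_pmf_of_set) auto
    also have "real (card ({..<n} \<inter> xs -` A)) = (\<Sum>i<n. indicator A (xs i))"
      by (simp add: sum_indicator_eq_card[symmetric] indicator_def Int_def)
    finally show "ennreal ((\<Sum>i<n. indicator A (xs i)) / real n) = emeasure ?N A" by simp
  qed auto
  also have "\<dots> = ?N"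
    using measure_of_of_measure[of ?N] by simp
  finally show ?thesis .
qed

lemma integrable_empirical:
  fixes xs :: "nat \<Rightarrow> 'a::euclidean_space" and f :: "'a \<Rightarrow> real"
  assumes "n \<ge> 1" and "f \<in> borel_measurable borel"
  shows "integrable (empirical n xs) f"
  using assms unfolding empirical_eq_distr_pmf_of_set[OF assms(1)]
  by (subst integrable_distr_eq)
    (auto intro!: integrable_measure_pmf_finite simp: measurable_pmf_measure1 lessThan_empty_iff)

lemma integral_empirical:
  fixes xs :: "nat \<Rightarrow> 'a::euclidean_space" and f :: "'a \<Rightarrow> real"
  assumes "n \<ge> 1" and "f \<in> borel_measurable borel"
  shows "integral\<^sup>L (empirical n xs) f = (\<Sum>i<n. f (xs i)) / n"
  using assms unfolding empirical_eq_distr_pmf_of_set[OF assms(1)]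
  by (subst integral_distr) (auto simp: integral_pmf_of_set measurable_pmf_measure1 lessThan_empty_iff)

lemma AE_empirical:
  fixes xs :: "nat \<Rightarrow> 'a::euclidean_space"
  assumes "n \<ge> 1"
  shows "AE x in empirical n xs. x \<in> xs ` {..<n}"
proof -
  have ne: "{..<n} \<noteq> {}" using assms by (auto simp: lessThan_empty_iff)
  show ?thesis
    unfolding empirical_eq_distr_pmf_of_set[OF assms]
    by (subst AE_distr_iff) (auto intro!: AE_pmfI sets_borel_finite
        simp: measurable_pmf_measure1 set_pmf_of_set[OF ne])
qed

subsection \<open>Bounds on the transport cost\<close>

lemma OT_cost_empirical_ge_dual:
  fixes xs ys :: "nat \<Rightarrow> 'a::euclidean_space" and A B :: "'a \<Rightarrow> real"
  assumes n: "n \<ge> 1" and A: "A \<in> borel_measurable borel" and B: "B \<in> borel_measurable borel"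
    and le: "\<And>i j. i < n \<Longrightarrow> j < n \<Longrightarrow> A (xs i) + B (ys j) \<le> c (xs i) (ys j)"
  shows "ennreal ((\<Sum>i<n. A (xs i)) / n + (\<Sum>j<n. B (ys j)) / n)
    \<le> OT_cost c (empirical n xs) (empirical n ys)"
  unfolding OT_cost_def
proof (rule INF_greatest)
  fix \<pi> assume "\<pi> \<in> couplings (empirical n xs) (empirical n ys)"
  hence sets_\<pi>: "sets \<pi> = sets (borel :: ('a \<times> 'a) measure)"
    and marg_fst: "distr \<pi> borel fst = empirical n xs"
    and marg_snd: "distr \<pi> borel snd = empirical n ys"
    unfolding couplings_def by auto
  have [measurable]: "fst \<in> \<pi> \<rightarrow>\<^sub>M (borel :: 'a measure)" "snd \<in> \<pi> \<rightarrow>\<^sub>M (borel :: 'a measure)"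
    by (simp_all add: measurable_cong_sets[OF sets_\<pi> refl] borel_measurable_fst_snd)
  have AE_supp: "AE z in \<pi>. fst z \<in> xs ` {..<n} \<and> snd z \<in> ys ` {..<n}"
  proof -
    have "AE x in distr \<pi> borel fst. x \<in> xs ` {..<n}" "AE y in distr \<pi> borel snd. y \<in> ys ` {..<n}"
      unfolding marg_fst marg_snd by (rule AE_empirical[OF n])+
    hence "AE z in \<pi>. fst z \<in> xs ` {..<n}" "AE z in \<pi>. snd z \<in> ys ` {..<n}"
      by (simp_all add: AE_distr_iff sets_borel_finite)
    thus ?thesis by eventually_elim simp
  qed
  have int_A: "integrable \<pi> (\<lambda>z. A (fst z))" and int_B: "integrable \<pi> (\<lambda>z. B (snd z))"
    using integrable_empirical[OF n A, of xs] integrable_empirical[OF n B, of ys] A B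
    by (simp_all flip: marg_fst marg_snd add: integrable_distr_eq)
  have "(\<Sum>i<n. A (xs i)) / n + (\<Sum>j<n. B (ys j)) / n = integral\<^sup>L \<pi> (\<lambda>z. A (fst z) + B (snd z))"
    using integral_empirical[OF n A, of xs] integral_empirical[OF n B, of ys] A B int_A int_B
    by (simp flip: marg_fst marg_snd add: integral_distr)
  also have "ennreal \<dots> \<le> (\<integral>\<^sup>+ z. ennreal (A (fst z) + B (snd z)) \<partial>\<pi>)"
    using int_A int_B by (intro ennreal_integral_le_nn_integral) auto
  also have "\<dots> \<le> (\<integral>\<^sup>+ z. ennreal (c (fst z) (snd z)) \<partial>\<pi>)"
    using AE_supp by (intro nn_integral_mono_AE, eventually_elim) (auto intro!: ennreal_leI le)
  finally show "ennreal ((\<Sum>i<n. A (xs i)) / n + (\<Sum>j<n. B (ys j)) / n)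
    \<le> (\<integral>\<^sup>+ z. ennreal (c (fst z) (snd z)) \<partial>\<pi>)" .
qed

text \<open>The coupling transporting \<open>x0 + v\<close> to \<open>y0 + v\<close>.\<close>

lemma OT_cost_translates_le:
  fixes h :: "'a::euclidean_space \<Rightarrow> real"
  assumes "continuous_on UNIV h"
  shows "OT_cost (\<lambda>x y. h (x - y))
      (distr (measure_pmf p) borel ((+) x0)) (distr (measure_pmf p) borel ((+) y0))
    \<le> ennreal (h (x0 - y0))"
proof -
  let ?\<pi> = "distr (measure_pmf p) (borel :: ('a \<times> 'a) measure) (\<lambda>v. (x0 + v, y0 + v))"
  have [measurable]: "(\<lambda>v. (x0 + v, y0 + v)) \<in> measure_pmf p \<rightarrow>\<^sub>M (borel :: ('a \<times> 'a) measure)"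
    by (simp add: measurable_pmf_measure1)
  have h_meas [measurable]: "h \<in> borel_measurable borel"
    using assms by (rule borel_measurable_continuous_onI)
  have "?\<pi> \<in> couplings (distr (measure_pmf p) borel ((+) x0)) (distr (measure_pmf p) borel ((+) y0))"
    unfolding couplings_def
    by (auto intro!: measure_pmf.prob_space_distr simp: distr_distr comp_def measurable_pmf_measure1)
  moreover have "(\<integral>\<^sup>+ z. ennreal (h (fst z - snd z)) \<partial>?\<pi>) = ennreal (h (x0 - y0))"
    by (subst nn_integral_distr) (auto simp: measurable_pmf_measure1)
  ultimately show ?thesis
    unfolding OT_cost_def by (metis (no_types, lifting) INF_lower)
qed

subsection \<open>A separated grid in a ball\<close>

definition grid :: "real \<Rightarrow> nat \<Rightarrow> 'a::euclidean_space set" where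
  "grid t m = (\<lambda>k. \<Sum>b\<in>Basis. (t * real (k b)) *\<^sub>R b) ` (Basis \<rightarrow>\<^sub>E {..<m})"

lemma inner_Basis_grid_point:
  "b \<in> Basis \<Longrightarrow> (\<Sum>b'\<in>Basis. (t * real (k b')) *\<^sub>R b') \<bullet> b = t * real (k b)"
  by (simp add: inner_sum_left inner_Basis if_distrib cong: if_cong)

lemma finite_grid: "finite (grid t m)"
  unfolding grid_def by (intro finite_imageI finite_PiE) auto

lemma card_grid:
  assumes "t \<noteq> 0"
  shows "card (grid t m :: 'a::euclidean_space set) = m ^ DIM('a)"
proof -
  have "inj_on (\<lambda>k. \<Sum>b\<in>Basis. (t * real (k b)) *\<^sub>R b :: 'a) (Basis \<rightarrow>\<^sub>E {..<m})"
  proof (rule inj_onI)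
    fix k k' assume k: "k \<in> Basis \<rightarrow>\<^sub>E {..<m}" and k': "k' \<in> Basis \<rightarrow>\<^sub>E {..<m}"
      and eq: "(\<Sum>b\<in>Basis. (t * real (k b)) *\<^sub>R b :: 'a) = (\<Sum>b\<in>Basis. (t * real (k' b)) *\<^sub>R b)"
    show "k = k'"
    proof (rule PiE_ext[OF k k'])
      fix b :: 'a assume "b \<in> Basis"
      thus "k b = k' b"
        using arg_cong[OF eq, of "\<lambda>v. v \<bullet> b"] assms by (simp add: inner_Basis_grid_point)
    qed
  qed
  thus ?thesis unfolding grid_def by (simp add: card_image card_PiE)
qed

lemma norm_grid_less:
  assumes "t > 0" and "v \<in> grid t m"
  shows "norm (v :: 'a::euclidean_space) < real DIM('a) * t * real m"
proof -
  obtain k where k: "k \<in> Basis \<rightarrow>\<^sub>E {..<m}" and v: "v = (\<Sum>b\<in>Basis. (t * real (k b)) *\<^sub>R b)"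
    using assms(2) unfolding grid_def by auto
  have "norm v \<le> (\<Sum>b\<in>(Basis :: 'a set). norm ((t * real (k b)) *\<^sub>R b))"
    unfolding v by (rule norm_sum)
  also have "\<dots> = (\<Sum>b\<in>(Basis :: 'a set). t * real (k b))"
    using assms(1) by (intro sum.cong) auto
  also have "\<dots> < (\<Sum>b\<in>(Basis :: 'a set). t * real m)"
    using k assms(1) by (intro sum_strict_mono) auto
  finally show ?thesis by simp
qed

lemma grid_separated:
  assumes "t \<ge> 0" and "v \<in> grid t m" and "w \<in> grid t m" and "v \<noteq> w"
  shows "t \<le> norm (v - w :: 'a::euclidean_space)"
proof -
  obtain k where k: "k \<in> Basis \<rightarrow>\<^sub>E {..<m}" and v: "v = (\<Sum>b\<in>Basis. (t * real (k b)) *\<^sub>R b)"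
    using assms(2) unfolding grid_def by auto
  obtain k' where k': "k' \<in> Basis \<rightarrow>\<^sub>E {..<m}" and w: "w = (\<Sum>b\<in>Basis. (t * real (k' b)) *\<^sub>R b)"
    using assms(3) unfolding grid_def by auto
  have "k \<noteq> k'" using assms(4) v w by auto
  then obtain b :: 'a where b: "b \<in> Basis" and kb: "k b \<noteq> k' b"
    using k k' by (meson PiE_ext)
  have "1 \<le> \<bar>real (k b) - real (k' b)\<bar>"
    using kb by (cases "k b < k' b") (auto simp: abs_if)
  hence "t \<le> t * \<bar>real (k b) - real (k' b)\<bar>"
    using assms(1) by (metis mult_1_right mult_left_mono)
  also have "\<dots> = \<bar>(v - w) \<bullet> b\<bar>"
    using b assms(1) by (simp add: v w inner_diff_left inner_Basis_grid_point abs_mult flip: right_diff_distrib)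
  also have "\<dots> \<le> norm (v - w)" using b by (rule Basis_le_norm)
  finally show ?thesis .
qed

text \<open>The witness is the grid with \<open>m = \<lceil>(2n)^(1/d)\<rceil>\<close> points per axis and spacing \<open>r / (d m)\<close>.\<close>

lemma exists_separated_set_in_ball:
  fixes r :: real and n :: nat
  assumes r: "r > 0" and n: "n \<ge> 1"
  obtains K :: "'a::euclidean_space set" and s where "s > 0" "finite K" "K \<noteq> {}"
    "\<forall>v\<in>K. norm v < r" "\<forall>v\<in>K. \<forall>w\<in>K. v \<noteq> w \<longrightarrow> s \<le> norm (v - w)" "2 * n \<le> card K"
    "r / (4 * real DIM('a)) * real n powr (- 1 / real DIM('a)) \<le> s"
proof -
  define d where "d = real DIM('a)"
  have d1: "d \<ge> 1" unfolding d_def by (simp add: DIM_positive Suc_leI)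
  define q where "q = real (2 * n) powr (1 / d)"
  have q1: "q \<ge> 1" unfolding q_def using n d1 by (intro ge_one_powr_ge_zero) auto
  define m where "m = nat \<lceil>q\<rceil>"
  have mq: "q \<le> real m" "real m \<le> 2 * q" and m1: "m \<ge> 1"
    unfolding m_def using q1 by linarith+
  define t where "t = r / (d * m)"
  have t: "t > 0" unfolding t_def using r d1 m1 by auto
  define K :: "'a set" where "K = grid t m"
  have "real (2 * n) = q ^ DIM('a)"
    unfolding q_def d_def using n by (simp add: powr_realpow[symmetric] powr_powr)
  also have "\<dots> \<le> real m ^ DIM('a)" using q1 mq by (intro power_mono) auto
  finally have card_K: "2 * n \<le> card K"
    unfolding K_def card_grid[OF t[THEN less_imp_neq, symmetric]] by (simp flip: of_nat_power)
  have "q = 2 powr (1 / d) * real n powr (1 / d)"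
    unfolding q_def by (simp add: powr_mult)
  also have "\<dots> \<le> 2 * real n powr (1 / d)"
    using d1 powr_mono[of "1 / d" 1 2] by (intro mult_right_mono) auto
  finally have q2: "q \<le> 2 * real n powr (1 / d)" .
  have "r / (4 * d) * real n powr (- 1 / d) = r / (4 * d * real n powr (1 / d))"
    using n by (simp add: powr_minus_divide divide_simps)
  also have "\<dots> \<le> t"
    unfolding t_def using r d1 m1 mq q2 n by (intro divide_left_mono) (auto intro!: mult_pos_pos)
  finally have scale: "r / (4 * d) * real n powr (- 1 / d) \<le> t" .
  have in_ball: "norm v < r" if "v \<in> K" for v
    using norm_grid_less[OF t that[unfolded K_def]] d1 m1 by (simp add: t_def d_def)
  have "K \<noteq> {}" using card_K n by (intro notI) simp
  moreover have "finite K" unfolding K_def by (rule finite_grid)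
  moreover have "t \<le> norm (v - w)" if "v \<in> K" "w \<in> K" "v \<noteq> w" for v w
    using grid_separated[OF less_imp_le[OF t]] that unfolding K_def by blast
  ultimately show ?thesis
    using that[of t K] t card_K scale in_ball unfolding d_def by blast
qed

lemma PiM_distr_measure_pmf:
  fixes f :: "'b \<Rightarrow> 'a::euclidean_space"
  assumes "finite I"
  shows "PiM I (\<lambda>_. distr (measure_pmf p) borel f) =
    distr (measure_pmf (Pi_pmf I d (\<lambda>_. p))) (PiM I (\<lambda>_. borel)) (\<lambda>a. restrict (f \<circ> a) I)"
proof -
  interpret product_prob_space "\<lambda>_. distr (measure_pmf p) borel f"
    by (intro product_prob_spaceI prob_space.prob_space_distr measure_pmf.prob_space_axioms) simp
  have meas: "(\<lambda>a. restrict (f \<circ> a) I) \<in> measure_pmf (Pi_pmf I d (\<lambda>_. p)) \<rightarrow>\<^sub>M PiM I (\<lambda>_. borel)"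
    by (auto simp: measurable_pmf_measure1 space_PiM)
  show ?thesis
  proof (rule PiM_eqI[symmetric, OF assms])
    show "sets (distr (measure_pmf (Pi_pmf I d (\<lambda>_. p))) (PiM I (\<lambda>_. borel)) (\<lambda>a. restrict (f \<circ> a) I))
      = sets (PiM I (\<lambda>_. distr (measure_pmf p) borel f))"
      by (subst sets_distr, rule sets_PiM_cong) auto
    fix A assume A: "\<And>i. i \<in> I \<Longrightarrow> A i \<in> sets (distr (measure_pmf p) borel f)"
    have "PiE I A \<in> sets (PiM I (\<lambda>_. borel))"
      using A by (intro sets_PiM_I_finite assms) auto
    moreover have "(\<lambda>a. restrict (f \<circ> a) I) -` PiE I A \<inter> space (measure_pmf (Pi_pmf I d (\<lambda>_. p)))
      = Pi I (\<lambda>i. f -` A i)"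
      by (auto simp: PiE_def Pi_def)
    ultimately have "emeasure (distr (measure_pmf (Pi_pmf I d (\<lambda>_. p))) (PiM I (\<lambda>_. borel))
        (\<lambda>a. restrict (f \<circ> a) I)) (PiE I A) = ennreal (\<Prod>i\<in>I. measure_pmf.prob p (f -` A i))"
      using meas by (subst emeasure_distr)
        (auto simp: measure_pmf.emeasure_eq_measure measure_Pi_pmf_Pi assms)
    also have "\<dots> = (\<Prod>i\<in>I. emeasure (distr (measure_pmf p) borel f) (A i))"
      using A by (subst prod_ennreal[symmetric])
        (auto simp: emeasure_distr measure_pmf.emeasure_eq_measure intro!: prod.cong)
    finally show "emeasure (distr (measure_pmf (Pi_pmf I d (\<lambda>_. p))) (PiM I (\<lambda>_. borel))
        (\<lambda>a. restrict (f \<circ> a) I)) (PiE I A) = (\<Prod>i\<in>I. emeasure (distr (measure_pmf p) borel f) (A i))" .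
  qed
qed

lemma measurable_restrict_comp_pmf:
  fixes f :: "'b \<Rightarrow> 'a::euclidean_space"
  shows "(\<lambda>a. restrict (f \<circ> a) I) \<in> measure_pmf P \<rightarrow>\<^sub>M PiM I (\<lambda>_. borel)"
  by (auto simp: measurable_pmf_measure1 space_PiM)

lemma measurable_two_samples_pmf:
  fixes f g :: "'b \<Rightarrow> 'a::euclidean_space"
  shows "(\<lambda>(a, b). (restrict (f \<circ> a) I, restrict (g \<circ> b) I))
    \<in> measure_pmf P \<Otimes>\<^sub>M measure_pmf Q \<rightarrow>\<^sub>M PiM I (\<lambda>_. borel) \<Otimes>\<^sub>M PiM I (\<lambda>_. borel)"
  unfolding split_beta'
  by (intro measurable_Pair measurable_compose[OF measurable_fst measurable_restrict_comp_pmf]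
      measurable_compose[OF measurable_snd measurable_restrict_comp_pmf])

lemma two_samples_distr_measure_pmf:
  fixes f g :: "'b \<Rightarrow> 'a::euclidean_space"
  assumes "finite I"
  shows "PiM I (\<lambda>_. distr (measure_pmf p) borel f) \<Otimes>\<^sub>M PiM I (\<lambda>_. distr (measure_pmf q) borel g) =
    distr (measure_pmf (Pi_pmf I d (\<lambda>_. p)) \<Otimes>\<^sub>M measure_pmf (Pi_pmf I d (\<lambda>_. q)))
      (PiM I (\<lambda>_. borel) \<Otimes>\<^sub>M PiM I (\<lambda>_. borel)) (\<lambda>(a, b). (restrict (f \<circ> a) I, restrict (g \<circ> b) I))"
proof -
  have "sigma_finite_measure (distr (measure_pmf (Pi_pmf I d (\<lambda>_. q))) (PiM I (\<lambda>_. borel))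
      (\<lambda>b. restrict (g \<circ> b) I))"
    by (intro prob_space_imp_sigma_finite measure_pmf.prob_space_distr measurable_restrict_comp_pmf)
  thus ?thesis
    unfolding PiM_distr_measure_pmf[OF assms, where p=p and d=d and f=f]
      PiM_distr_measure_pmf[OF assms, where p=q and d=d and f=g]
    by (intro pair_measure_distr measurable_restrict_comp_pmf)
qed

lemma nn_integral_two_samples_pmf:
  fixes f g :: "'b \<Rightarrow> 'a::euclidean_space"
  assumes F: "F \<in> borel_measurable (PiM I (\<lambda>_. borel) \<Otimes>\<^sub>M PiM I (\<lambda>_. (borel :: 'a measure)))"
    and "finite I"
  shows "(\<integral>\<^sup>+ \<omega>. F \<omega> \<partial>(PiM I (\<lambda>_. distr (measure_pmf p) borel f) \<Otimes>\<^sub>M PiM I (\<lambda>_. distr (measure_pmf q) borel g)))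
    = (\<integral>\<^sup>+ ab. F (restrict (f \<circ> fst ab) I, restrict (g \<circ> snd ab) I)
        \<partial>pair_pmf (Pi_pmf I d (\<lambda>_. p)) (Pi_pmf I d (\<lambda>_. q)))"
proof -
  note E = measurable_two_samples_pmf[of f I g "Pi_pmf I d (\<lambda>_. p)" "Pi_pmf I d (\<lambda>_. q)"]
  have FE: "(\<lambda>ab. F (restrict (f \<circ> fst ab) I, restrict (g \<circ> snd ab) I))
      \<in> borel_measurable (measure_pmf (Pi_pmf I d (\<lambda>_. p)) \<Otimes>\<^sub>M measure_pmf (Pi_pmf I d (\<lambda>_. q)))"
    using measurable_compose[OF E F] by (simp add: split_beta')
  have "(\<integral>\<^sup>+ \<omega>. F \<omega> \<partial>(PiM I (\<lambda>_. distr (measure_pmf p) borel f) \<Otimes>\<^sub>M PiM I (\<lambda>_. distr (measure_pmf q) borel g)))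
    = (\<integral>\<^sup>+ ab. F (restrict (f \<circ> fst ab) I, restrict (g \<circ> snd ab) I)
        \<partial>(measure_pmf (Pi_pmf I d (\<lambda>_. p)) \<Otimes>\<^sub>M measure_pmf (Pi_pmf I d (\<lambda>_. q))))"
    unfolding two_samples_distr_measure_pmf[OF assms(2), where d=d]
    using E F by (subst nn_integral_distr) (auto simp: split_beta')
  also have "\<dots> = (\<integral>\<^sup>+ ab. F (restrict (f \<circ> fst ab) I, restrict (g \<circ> snd ab) I)
        \<partial>pair_pmf (Pi_pmf I d (\<lambda>_. p)) (Pi_pmf I d (\<lambda>_. q)))"
    by (simp add: measure_pmf.nn_integral_fst[OF FE, symmetric] nn_integral_pair_pmf')
  finally show ?thesis .
qed

lemma measurable_sample_component:
  fixes n :: nat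
  assumes "i < n"
  shows "(\<lambda>\<omega>. fst \<omega> i) \<in> PiM {..<n} (\<lambda>_. M) \<Otimes>\<^sub>M PiM {..<n} (\<lambda>_. N) \<rightarrow>\<^sub>M M"
    and "(\<lambda>\<omega>. snd \<omega> i) \<in> PiM {..<n} (\<lambda>_. M) \<Otimes>\<^sub>M PiM {..<n} (\<lambda>_. N) \<rightarrow>\<^sub>M N"
  by (rule measurable_compose[OF measurable_fst], rule measurable_component_singleton, use assms in simp)
    (rule measurable_compose[OF measurable_snd], rule measurable_component_singleton, use assms in simp)

lemma pred_two_samples_in:
  fixes n :: nat
  assumes S: "S \<in> sets M" and T: "T \<in> sets N"
  shows "Measurable.pred (PiM {..<n} (\<lambda>_. M) \<Otimes>\<^sub>M PiM {..<n} (\<lambda>_. N))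
    (\<lambda>\<omega>. \<forall>i\<in>{..<n}. fst \<omega> i \<in> S \<and> snd \<omega> i \<in> T)"
  by (intro pred_intros_finite(3)[OF finite_lessThan] pred_intros_logic(3)
      pred_sets2[OF S] pred_sets2[OF T] measurable_sample_component) simp_all

lemma AE_two_samples_pmf:
  fixes f g :: "'b \<Rightarrow> 'a::euclidean_space" and n :: nat
  assumes "finite (set_pmf p)" and "finite (set_pmf q)"
  shows "AE \<omega> in PiM {..<n} (\<lambda>_. distr (measure_pmf p) borel f) \<Otimes>\<^sub>M PiM {..<n} (\<lambda>_. distr (measure_pmf q) borel g).
    \<forall>i<n. fst \<omega> i \<in> f ` set_pmf p \<and> snd \<omega> i \<in> g ` set_pmf q"
proof -
  let ?P = "Pi_pmf {..<n} undefined (\<lambda>_. p)" and ?Q = "Pi_pmf {..<n} undefined (\<lambda>_. q)"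
  have pred: "Measurable.pred (PiM {..<n} (\<lambda>_. borel) \<Otimes>\<^sub>M PiM {..<n} (\<lambda>_. borel))
      (\<lambda>\<omega>. \<forall>i\<in>{..<n}. fst \<omega> i \<in> f ` set_pmf p \<and> snd \<omega> i \<in> g ` set_pmf q)"
    using assms by (intro pred_two_samples_in sets_borel_finite) simp_all
  have pred_pmf: "Measurable.pred (measure_pmf ?P \<Otimes>\<^sub>M measure_pmf ?Q)
      (\<lambda>ab. \<forall>i\<in>{..<n}. f (fst ab i) \<in> f ` set_pmf p \<and> g (snd ab i) \<in> g ` set_pmf q)"
  proof (rule pred_intros_finite(3)[OF finite_lessThan])
    fix i
    have "Measurable.pred (measure_pmf ?P) (\<lambda>a. f (a i) \<in> f ` set_pmf p)"
      "Measurable.pred (measure_pmf ?Q) (\<lambda>b. g (b i) \<in> g ` set_pmf q)"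
      by simp_all
    from measurable_compose[OF measurable_fst this(1)] measurable_compose[OF measurable_snd this(2)]
    show "Measurable.pred (measure_pmf ?P \<Otimes>\<^sub>M measure_pmf ?Q)
        (\<lambda>ab. f (fst ab i) \<in> f ` set_pmf p \<and> g (snd ab i) \<in> g ` set_pmf q)"
      by (rule pred_intros_logic(3))
  qed
  have "AE ab in measure_pmf ?P \<Otimes>\<^sub>M measure_pmf ?Q.
      \<forall>i\<in>{..<n}. f (fst ab i) \<in> f ` set_pmf p \<and> g (snd ab i) \<in> g ` set_pmf q"
  proof (rule pair_sigma_finite.AE_pair_measure)
    show "pair_sigma_finite (measure_pmf ?P) (measure_pmf ?Q)"
      by (rule pair_sigma_finite.intro) (rule measure_pmf.sigma_finite_measure_axioms)+
    show "AE a in measure_pmf ?P. AE b in measure_pmf ?Q.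
        \<forall>i\<in>{..<n}. f (fst (a, b) i) \<in> f ` set_pmf p \<and> g (snd (a, b) i) \<in> g ` set_pmf q"
      by (intro AE_pmfI) (auto simp: set_Pi_pmf PiE_dflt_def)
  qed (rule predE[OF pred_pmf])
  hence "AE \<omega> in distr (measure_pmf ?P \<Otimes>\<^sub>M measure_pmf ?Q)
      (PiM {..<n} (\<lambda>_. borel) \<Otimes>\<^sub>M PiM {..<n} (\<lambda>_. borel))
      (\<lambda>(a, b). (restrict (f \<circ> a) {..<n}, restrict (g \<circ> b) {..<n})).
      \<forall>i\<in>{..<n}. fst \<omega> i \<in> f ` set_pmf p \<and> snd \<omega> i \<in> g ` set_pmf q"
    by (subst AE_distr_iff[OF measurable_two_samples_pmf predE[OF pred]]) (simp add: split_beta')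
  thus ?thesis
    by (subst two_samples_distr_measure_pmf[OF finite_lessThan, where d=undefined]) (simp add: Ball_def)
qed

lemma distr_measure_pmf_in_prob_measures:
  fixes f :: "'b \<Rightarrow> 'a::euclidean_space"
  assumes "finite (set_pmf p)" and "f ` set_pmf p \<subseteq> S"
  shows "distr (measure_pmf p) borel f \<in> prob_measures S"
proof -
  have "AE x in distr (measure_pmf p) borel f. x \<in> f ` set_pmf p"
    using assms(1) by (subst AE_distr_iff) (auto intro!: AE_pmfI sets_borel_finite simp: measurable_pmf_measure1)
  hence "AE x in distr (measure_pmf p) borel f. x \<in> S"
    using assms(2) by (auto elim!: eventually_mono)
  thus ?thesis
    unfolding prob_measures_def by (auto intro: measure_pmf.prob_space_distr simp: measurable_pmf_measure1)
qed

subsection \<open>Unmatched sample points\<close>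

definition unmatched :: "nat \<Rightarrow> (nat \<Rightarrow> 'a) \<Rightarrow> (nat \<Rightarrow> 'a) \<Rightarrow> real" where
  "unmatched n xs ys = (\<Sum>i<n. if \<exists>j\<in>{..<n}. xs i = ys j then 0 else 1)"

lemma unmatched_ge_collisions:
  "real n - (\<Sum>i<n. \<Sum>j<n. if xs i = ys j then 1 else 0) \<le> unmatched n xs ys"
proof -
  have "1 - (\<Sum>j<n. if xs i = ys j then 1 else 0 :: real) \<le> (if \<exists>j\<in>{..<n}. xs i = ys j then 0 else 1)"
    for i
  proof (cases "\<exists>j\<in>{..<n}. xs i = ys j")
    case True
    then obtain j where "j < n" "xs i = ys j" by auto
    hence "(if xs i = ys j then 1 else 0) \<le> (\<Sum>j<n. if xs i = ys j then 1 else 0 :: real)"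
      by (intro member_le_sum) auto
    with True \<open>xs i = ys j\<close> show ?thesis by simp
  qed simp
  hence "(\<Sum>i<n. 1 - (\<Sum>j<n. if xs i = ys j then 1 else 0 :: real)) \<le> unmatched n xs ys"
    unfolding unmatched_def by (intro sum_mono)
  thus ?thesis by (simp add: sum_subtractf)
qed

lemma finite_set_Pi_pmf_of_set:
  "finite K \<Longrightarrow> K \<noteq> {} \<Longrightarrow> finite I \<Longrightarrow> finite (set_pmf (Pi_pmf I d (\<lambda>_. pmf_of_set K)))"
  by (simp add: set_Pi_pmf comp_def finite_PiE_dflt)

lemma expectation_collision_le:
  assumes "finite K" "K \<noteq> {}" "finite I" "j \<in> I"
  shows "measure_pmf.expectation (pair_pmf P (Pi_pmf I d (\<lambda>_. pmf_of_set K)))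
      (\<lambda>ab. if fst ab i = snd ab j then 1 else 0) \<le> 1 / real (card K)"
proof -
  define Q where "Q = Pi_pmf I d (\<lambda>_. pmf_of_set K)"
  have component: "map_pmf (\<lambda>b. b j) Q = pmf_of_set K"
    using assms by (simp add: Q_def Pi_pmf_component)
  have inner: "(\<integral>\<^sup>+ b. ennreal (if a i = b j then 1 else 0) \<partial>Q) \<le> ennreal (1 / real (card K))" for a
  proof -
    have "(\<integral>\<^sup>+ b. ennreal (if a i = b j then 1 else 0) \<partial>Q) = (\<integral>\<^sup>+ b. indicator ((\<lambda>b. b j) -` {a i}) b \<partial>Q)"
      by (intro nn_integral_cong) (auto simp: indicator_def)
    also have "\<dots> = emeasure (measure_pmf (map_pmf (\<lambda>b. b j) Q)) {a i}"
      by simp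
    also have "\<dots> = ennreal (pmf (pmf_of_set K) (a i))"
      unfolding component by (rule emeasure_pmf_single)
    also have "\<dots> \<le> ennreal (1 / real (card K))"
      using assms by (intro ennreal_leI) (auto simp: indicator_def)
    finally show ?thesis .
  qed
  have "ennreal (measure_pmf.expectation (pair_pmf P Q) (\<lambda>ab. if fst ab i = snd ab j then 1 else 0))
      = (\<integral>\<^sup>+ ab. ennreal (if fst ab i = snd ab j then 1 else 0) \<partial>pair_pmf P Q)"
    by (intro nn_integral_eq_integral[symmetric] measure_pmf.integrable_const_bound[where B=1]) auto
  also have "\<dots> = (\<integral>\<^sup>+ a. \<integral>\<^sup>+ b. ennreal (if a i = b j then 1 else 0) \<partial>Q \<partial>P)"
    by (simp add: nn_integral_pair_pmf')
  also have "\<dots> \<le> (\<integral>\<^sup>+ a. ennreal (1 / real (card K)) \<partial>P)"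
    by (intro nn_integral_mono inner)
  finally show ?thesis by (simp add: Q_def ennreal_le_iff)
qed

lemma expectation_unmatched_ge:
  fixes n :: nat
  assumes "finite K" "K \<noteq> {}"
  shows "real n - real n ^ 2 / real (card K) \<le> measure_pmf.expectation
    (pair_pmf (Pi_pmf {..<n} d (\<lambda>_. pmf_of_set K)) (Pi_pmf {..<n} d (\<lambda>_. pmf_of_set K)))
    (\<lambda>ab. unmatched n (fst ab) (snd ab))"
proof -
  let ?Q = "pair_pmf (Pi_pmf {..<n} d (\<lambda>_. pmf_of_set K)) (Pi_pmf {..<n} d (\<lambda>_. pmf_of_set K))"
  have int: "integrable (measure_pmf ?Q) f" for f :: "_ \<Rightarrow> real"
    using assms by (intro integrable_measure_pmf_finite) (simp add: finite_set_Pi_pmf_of_set)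
  have "(\<Sum>i<n. \<Sum>j<n. measure_pmf.expectation ?Q (\<lambda>ab. if fst ab i = snd ab j then 1 else 0))
      \<le> (\<Sum>i<n. \<Sum>j<n. 1 / real (card K))"
    using assms by (intro sum_mono expectation_collision_le) auto
  hence "real n - real n ^ 2 / real (card K)
      \<le> measure_pmf.expectation ?Q (\<lambda>ab. real n - (\<Sum>i<n. \<Sum>j<n. if fst ab i = snd ab j then 1 else 0))"
    by (simp add: int integral_sum power2_eq_square)
  also have "\<dots> \<le> measure_pmf.expectation ?Q (\<lambda>ab. unmatched n (fst ab) (snd ab))"
    by (intro integral_mono int unmatched_ge_collisions)
  finally show ?thesis .
qed

lemma expectation_gap_ge:
  fixes n :: nat and d :: 'a and F :: "(nat \<Rightarrow> 'a) \<Rightarrow> real"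
  assumes "finite K" "K \<noteq> {}" "2 * n \<le> card K" "n \<ge> 1" "c \<ge> 0"
  defines "P \<equiv> Pi_pmf {..<n} d (\<lambda>_. pmf_of_set K)"
  shows "c / 2 \<le> measure_pmf.expectation (pair_pmf P P)
    (\<lambda>ab. F (fst ab) - F (snd ab) + c / n * unmatched n (fst ab) (snd ab))"
proof -
  have int: "integrable (measure_pmf (pair_pmf P P)) f" for f :: "_ \<Rightarrow> real"
    using assms by (intro integrable_measure_pmf_finite) (simp add: finite_set_Pi_pmf_of_set)
  have "real n ^ 2 / real (card K) \<le> real n / 2"
    using assms(3,4) by (simp add: field_simps power2_eq_square)
  hence "c / n * (real n / 2) \<le> c / n * (real n - real n ^ 2 / real (card K))"
    using assms(5) by (intro mult_left_mono) auto
  hence "c / 2 \<le> c / n * (real n - real n ^ 2 / real (card K))"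
    using assms(4) by simp
  also have "\<dots> \<le> c / n * measure_pmf.expectation (pair_pmf P P) (\<lambda>ab. unmatched n (fst ab) (snd ab))"
    unfolding P_def using assms by (intro mult_left_mono expectation_unmatched_ge) auto
  also have "\<dots> = measure_pmf.expectation (pair_pmf P P)
      (\<lambda>ab. F (fst ab) - F (snd ab) + c / n * unmatched n (fst ab) (snd ab))"
    \<comment> \<open>\<open>F (fst ab)\<close> and \<open>F (snd ab)\<close> have the same expectation\<close>
    by (simp add: int)
  finally show ?thesis .
qed

subsection \<open>The lower bound for translated uniform laws\<close>

lemma OT_cost_empirical_translates_ge:
  fixes h L :: "'a::euclidean_space \<Rightarrow> real" and xs ys :: "nat \<Rightarrow> 'a"
  assumes n: "n \<ge> 1" and lin: "bounded_linear L" and lam: "lam \<ge> 0" and s: "s \<ge> 0" and alpha: "\<alpha> > 0"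
    and sep: "\<And>v w. v \<in> K \<Longrightarrow> w \<in> K \<Longrightarrow> v \<noteq> w \<Longrightarrow> s \<le> norm (v - w)"
    and growth: "\<And>v w. v \<in> K \<Longrightarrow> w \<in> K \<Longrightarrow>
      h (x0 - y0) + L (v - w) + lam * norm (v - w) powr \<alpha> \<le> h ((x0 + v) - (y0 + w))"
    and xs: "\<And>i. i < n \<Longrightarrow> xs i \<in> (+) x0 ` K" and ys: "\<And>j. j < n \<Longrightarrow> ys j \<in> (+) y0 ` K"
  shows "ennreal (h (x0 - y0) + (\<Sum>i<n. L (xs i - x0)) / n - (\<Sum>j<n. L (ys j - y0)) / n
      + lam * s powr \<alpha> / n * unmatched n xs (\<lambda>j. ys j + (x0 - y0)))
    \<le> OT_cost (\<lambda>x y. h (x - y)) (empirical n xs) (empirical n ys)"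
proof -
  define D where "D = (\<lambda>j. ys j + (x0 - y0)) ` {..<n}"
  define A where "A x = h (x0 - y0) + L (x - x0) + lam * s powr \<alpha> * (if x \<in> D then 0 else 1)" for x
  define B where "B y = - L (y - y0)" for y
  have [measurable]: "L \<in> borel_measurable borel" "D \<in> sets borel"
    using lin by (auto intro: borel_measurable_continuous_onI linear_continuous_on sets_borel_finite
        simp: D_def)
  have dual: "A (xs i) + B (ys j) \<le> h (xs i - ys j)" if "i < n" "j < n" for i j
  proof -
    obtain v w where v: "v \<in> K" "xs i = x0 + v" and w: "w \<in> K" "ys j = y0 + w"
      using xs[OF \<open>i < n\<close>] ys[OF \<open>j < n\<close>] by auto
    have "lam * s powr \<alpha> * (if xs i \<in> D then 0 else 1) \<le> lam * norm (v - w) powr \<alpha>"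
    proof (cases "v = w")
      case True
      hence "xs i \<in> D"
        using v w \<open>j < n\<close> unfolding D_def by (auto intro!: image_eqI[of _ _ j] simp: algebra_simps)
      thus ?thesis using lam by simp
    next
      case False
      hence "s powr \<alpha> \<le> norm (v - w) powr \<alpha>"
        using sep[OF v(1) w(1)] s alpha by (intro powr_mono2) auto
      thus ?thesis using lam by (simp add: mult_left_mono)
    qed
    moreover have "L (xs i - x0) - L (ys j - y0) = L (v - w)"
      using v w by (simp add: linear_diff[OF bounded_linear.linear[OF lin]])
    ultimately show ?thesis
      using growth[OF v(1) w(1)] v w unfolding A_def B_def by simp
  qed
  have "(\<Sum>i<n. A (xs i)) / n + (\<Sum>j<n. B (ys j)) / n = h (x0 - y0) + (\<Sum>i<n. L (xs i - x0)) / n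
      - (\<Sum>j<n. L (ys j - y0)) / n + lam * s powr \<alpha> / n * unmatched n xs (\<lambda>j. ys j + (x0 - y0))"
    using n unfolding A_def B_def D_def unmatched_def
    by (simp add: sum.distrib sum_distrib_left sum_negf image_iff field_simps)
  moreover have "A \<in> borel_measurable borel" "B \<in> borel_measurable borel"
    unfolding A_def B_def by measurable
  ultimately show ?thesis
    using OT_cost_empirical_ge_dual[where c="\<lambda>x y. h (x - y)" and xs=xs and ys=ys, OF n _ _ dual]
    by simp
qed


lemma ennreal_le_ediff:
  assumes "0 \<le> c" and "ennreal (c + x) \<le> a" and "b \<le> ennreal c"
  shows "ennreal x \<le> ediff a b"
proof -
  have "ennreal x = ennreal (c + x) - ennreal c"
    using assms(1) by (simp add: ennreal_minus)
  also have "\<dots> \<le> a - b"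
    using assms(2,3) by (rule ennreal_minus_mono)
  also have "\<dots> \<le> ediff a b"
    unfolding ediff_def by simp
  finally show ?thesis .
qed

lemma expected_OT_error_uniform_translates_ge:
  fixes h L :: "'a::euclidean_space \<Rightarrow> real" and n :: nat
  assumes K: "finite K" "K \<noteq> {}" "2 * n \<le> card K" and n: "n \<ge> 1"
    and lin: "bounded_linear L" and hc: "continuous_on UNIV h" and h0: "0 \<le> h (x0 - y0)"
    and lam: "lam \<ge> 0" and s: "s \<ge> 0" and alpha: "\<alpha> > 0"
    and sep: "\<And>v w. v \<in> K \<Longrightarrow> w \<in> K \<Longrightarrow> v \<noteq> w \<Longrightarrow> s \<le> norm (v - w)"
    and growth: "\<And>v w. v \<in> K \<Longrightarrow> w \<in> K \<Longrightarrow>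
      h (x0 - y0) + L (v - w) + lam * norm (v - w) powr \<alpha> \<le> h ((x0 + v) - (y0 + w))"
  shows "ennreal (lam * s powr \<alpha> / 2) \<le> expected_OT_error (\<lambda>x y. h (x - y)) n
    (distr (measure_pmf (pmf_of_set K)) borel ((+) x0)) (distr (measure_pmf (pmf_of_set K)) borel ((+) y0))"
proof -
  define p where "p = pmf_of_set K"
  define P where "P = Pi_pmf {..<n} undefined (\<lambda>_. p)"
  define \<kappa> where "\<kappa> = lam * s powr \<alpha> / n"
  define gap where "gap \<omega> = (\<Sum>i<n. L (fst \<omega> i - x0)) / n - (\<Sum>j<n. L (snd \<omega> j - y0)) / n
    + \<kappa> * unmatched n (fst \<omega>) (\<lambda>j. snd \<omega> j + (x0 - y0))" for \<omega> :: "(nat \<Rightarrow> 'a) \<times> (nat \<Rightarrow> 'a)"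
  define F where "F a = (\<Sum>i<n. L (a i)) / n" for a :: "nat \<Rightarrow> 'a"
  define G where "G ab = F (fst ab) - F (snd ab) + \<kappa> * unmatched n (fst ab) (snd ab)"
    for ab :: "(nat \<Rightarrow> 'a) \<times> (nat \<Rightarrow> 'a)"
  let ?\<mu> = "distr (measure_pmf p) borel ((+) x0)" and ?\<nu> = "distr (measure_pmf p) borel ((+) y0)"
  let ?S = "PiM {..<n} (\<lambda>_. ?\<mu>) \<Otimes>\<^sub>M PiM {..<n} (\<lambda>_. ?\<nu>)"
  let ?err = "\<lambda>\<omega>. ediff (OT_cost (\<lambda>x y. h (x - y)) (empirical n (fst \<omega>)) (empirical n (snd \<omega>)))
    (OT_cost (\<lambda>x y. h (x - y)) ?\<mu> ?\<nu>)"
  have set_p: "set_pmf p = K" using K by (simp add: p_def)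
  have "AE \<omega> in ?S. \<forall>i<n. fst \<omega> i \<in> (+) x0 ` K \<and> snd \<omega> i \<in> (+) y0 ` K"
    using AE_two_samples_pmf[where p=p and q=p and f="(+) x0" and g="(+) y0" and n=n] K by (simp add: set_p)
  hence gap_le_err: "AE \<omega> in ?S. ennreal (gap \<omega>) \<le> ?err \<omega>"
  proof eventually_elim
    case (elim \<omega>)
    have "ennreal (h (x0 - y0) + gap \<omega>) \<le> OT_cost (\<lambda>x y. h (x - y)) (empirical n (fst \<omega>)) (empirical n (snd \<omega>))"
      using OT_cost_empirical_translates_ge[OF n lin lam s alpha sep growth, where xs="fst \<omega>" and ys="snd \<omega>"] elim
      unfolding gap_def \<kappa>_def by (simp add: algebra_simps)
    moreover have "OT_cost (\<lambda>x y. h (x - y)) ?\<mu> ?\<nu> \<le> ennreal (h (x0 - y0))"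
      by (rule OT_cost_translates_le[OF hc])
    ultimately show ?case by (rule ennreal_le_ediff[OF h0])
  qed
  have gap_meas: "(\<lambda>\<omega>. ennreal (gap \<omega>)) \<in> borel_measurable (PiM {..<n} (\<lambda>_. borel) \<Otimes>\<^sub>M PiM {..<n} (\<lambda>_. borel))"
  proof -
    have [measurable]: "L \<in> borel_measurable borel"
      using lin by (intro borel_measurable_continuous_onI linear_continuous_on)
    show ?thesis
      unfolding gap_def unmatched_def by measurable
  qed
  have gap_pmf: "gap (restrict ((+) x0 \<circ> fst ab) {..<n}, restrict ((+) y0 \<circ> snd ab) {..<n}) = G ab" for ab
  proof -
    have "(\<Sum>i<n. L (restrict ((+) x0 \<circ> fst ab) {..<n} i - x0)) = (\<Sum>i<n. L (fst ab i))"
      "(\<Sum>j<n. L (restrict ((+) y0 \<circ> snd ab) {..<n} j - y0)) = (\<Sum>j<n. L (snd ab j))"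
      by (auto intro!: sum.cong)
    moreover have "unmatched n (restrict ((+) x0 \<circ> fst ab) {..<n})
        (\<lambda>j. restrict ((+) y0 \<circ> snd ab) {..<n} j + (x0 - y0)) = unmatched n (fst ab) (snd ab)"
      unfolding unmatched_def by (intro sum.cong refl) (auto simp: algebra_simps)
    ultimately show ?thesis
      unfolding gap_def G_def F_def by simp
  qed
  have int: "integrable (measure_pmf (pair_pmf P P)) f" for f :: "_ \<Rightarrow> real"
    using K by (intro integrable_measure_pmf_finite) (simp add: P_def p_def finite_set_Pi_pmf_of_set)
  have "lam * s powr \<alpha> / 2 \<le> measure_pmf.expectation (pair_pmf P P) G"
    unfolding G_def \<kappa>_def P_def p_def using K n lam by (intro expectation_gap_ge) auto
  hence "ennreal (lam * s powr \<alpha> / 2) \<le> ennreal (measure_pmf.expectation (pair_pmf P P) G)"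
    by (rule ennreal_leI)
  also have "\<dots> \<le> (\<integral>\<^sup>+ ab. ennreal (G ab) \<partial>pair_pmf P P)"
    by (rule ennreal_integral_le_nn_integral[OF int])
  also have "\<dots> = (\<integral>\<^sup>+ \<omega>. ennreal (gap \<omega>) \<partial>?S)"
    by (simp add: nn_integral_two_samples_pmf[OF gap_meas finite_lessThan, where d=undefined] gap_pmf P_def)
  also have "\<dots> \<le> (\<integral>\<^sup>+ \<omega>. ?err \<omega> \<partial>?S)"
    using gap_le_err by (rule nn_integral_mono_AE)
  finally show ?thesis unfolding expected_OT_error_def p_def .
qed

lemma growth_condition_affine_minorant:
  fixes h :: "'a::real_normed_vector \<Rightarrow> real"
  assumes diff: "h differentiable (at z0)"
    and growth: "\<forall>z\<in>Z. if \<alpha> \<le> 1 then h z - h z0 \<ge> lam * norm (z - z0) powr \<alpha>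
      else h z - h z0 \<ge> frechet_derivative h (at z0) (z - z0) + lam * norm (z - z0) powr \<alpha>"
  obtains L where "bounded_linear L"
    and "\<And>z. z \<in> Z \<Longrightarrow> h z0 + L (z - z0) + lam * norm (z - z0) powr \<alpha> \<le> h z"
proof (cases "\<alpha> \<le> 1")
  case True
  with growth show ?thesis by (intro that[of "\<lambda>_. 0"]) (auto simp: bounded_linear_zero)
next
  case False
  have "bounded_linear (frechet_derivative h (at z0))"
    using diff by (simp add: frechet_derivative_works has_derivative_bounded_linear)
  with False growth show ?thesis by (intro that) auto
qed

lemma common_ball_in_interiors:
  assumes "x0 \<in> interior X" and "y0 \<in> interior Y"
  obtains r where "r > 0" "ball x0 r \<subseteq> X" "ball y0 r \<subseteq> Y"
proof -
  obtain r1 r2 where "r1 > 0" "ball x0 r1 \<subseteq> X" "r2 > 0" "ball y0 r2 \<subseteq> Y"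
    using assms by (meson interior_subset open_contains_ball_eq open_interior subset_trans)
  thus ?thesis by (intro that[of "min r1 r2"]) auto
qed

lemma SUP_expected_OT_error_ge:
  fixes h L :: "'a::euclidean_space \<Rightarrow> real" and n :: nat
  assumes r: "r > 0" and X: "ball x0 r \<subseteq> X" and Y: "ball y0 r \<subseteq> Y" and n: "n \<ge> 1"
    and lin: "bounded_linear L" and hc: "continuous_on UNIV h" and h0: "0 \<le> h (x0 - y0)"
    and lam: "lam \<ge> 0" and alpha: "\<alpha> > 0"
    and growth: "\<And>x y. x \<in> X \<Longrightarrow> y \<in> Y \<Longrightarrow>
      h (x0 - y0) + L ((x - y) - (x0 - y0)) + lam * norm ((x - y) - (x0 - y0)) powr \<alpha> \<le> h (x - y)"
  shows "ennreal ((r / (4 * real DIM('a))) powr \<alpha> / 2 * lam * real n powr (- \<alpha> / real DIM('a)))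
    \<le> (SUP \<mu> \<in> prob_measures X. SUP \<nu> \<in> prob_measures Y. expected_OT_error (\<lambda>x y. h (x - y)) n \<mu> \<nu>)"
proof -
  obtain K :: "'a set" and s where s: "s > 0" and K: "finite K" "K \<noteq> {}" "2 * n \<le> card K"
    and K_ball: "\<forall>v\<in>K. norm v < r" and sep: "\<forall>v\<in>K. \<forall>w\<in>K. v \<noteq> w \<longrightarrow> s \<le> norm (v - w)"
    and scale: "r / (4 * real DIM('a)) * real n powr (- 1 / real DIM('a)) \<le> s"
    using exists_separated_set_in_ball[OF r n] by metis
  have in_X: "(+) x0 ` K \<subseteq> X" and in_Y: "(+) y0 ` K \<subseteq> Y"
    using K_ball X Y by (auto simp: dist_norm)
  have growth_K: "h (x0 - y0) + L (v - w) + lam * norm (v - w) powr \<alpha> \<le> h ((x0 + v) - (y0 + w))"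
    if "v \<in> K" "w \<in> K" for v w
    using growth[of "x0 + v" "y0 + w"] in_X in_Y that by (auto simp: algebra_simps)
  have "(r / (4 * real DIM('a)) * real n powr (- 1 / real DIM('a))) powr \<alpha>
      = (r / (4 * real DIM('a))) powr \<alpha> * (real n powr (- 1 / real DIM('a))) powr \<alpha>"
    by (rule powr_mult)
  hence "(r / (4 * real DIM('a))) powr \<alpha> * real n powr (- \<alpha> / real DIM('a))
      = (r / (4 * real DIM('a)) * real n powr (- 1 / real DIM('a))) powr \<alpha>"
    by (simp add: powr_powr)
  also have "\<dots> \<le> s powr \<alpha>"
    using scale r alpha by (intro powr_mono2) auto
  finally have "(r / (4 * real DIM('a))) powr \<alpha> / 2 * lam * real n powr (- \<alpha> / real DIM('a))
      \<le> lam * s powr \<alpha> / 2"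
    using lam by (simp add: mult_left_mono mult.commute mult.left_commute)
  hence "ennreal ((r / (4 * real DIM('a))) powr \<alpha> / 2 * lam * real n powr (- \<alpha> / real DIM('a)))
      \<le> ennreal (lam * s powr \<alpha> / 2)"
    by (rule ennreal_leI)
  also have "\<dots> \<le> expected_OT_error (\<lambda>x y. h (x - y)) n
      (distr (measure_pmf (pmf_of_set K)) borel ((+) x0)) (distr (measure_pmf (pmf_of_set K)) borel ((+) y0))"
    using sep s by (intro expected_OT_error_uniform_translates_ge[OF K n lin hc h0 lam _ alpha _ growth_K]) auto
  also have "\<dots> \<le> (SUP \<mu> \<in> prob_measures X. SUP \<nu> \<in> prob_measures Y. expected_OT_error (\<lambda>x y. h (x - y)) n \<mu> \<nu>)"
    using K in_X in_Y
    by (intro SUP_upper2[OF distr_measure_pmf_in_prob_measures[where p="pmf_of_set K" and f="(+) x0"]]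
        SUP_upper[OF distr_measure_pmf_in_prob_measures[where p="pmf_of_set K" and f="(+) y0"]])
      simp_all
  finally show ?thesis .
qed

theorem mainTheorem15:
  fixes X Y :: "'a::euclidean_space set" and x0 y0 :: 'a and \<alpha> :: real
  assumes dim: "DIM('a) \<ge> 5"
    and convX: "convex X" and convY: "convex Y"
    and intX: "interior X \<noteq> {}" and intY: "interior Y \<noteq> {}"
    and x0: "x0 \<in> interior X" and y0: "y0 \<in> interior Y"
    and alpha: "0 < \<alpha>" "\<alpha> \<le> 2"
  shows "\<exists>C>0. \<forall>(h :: 'a \<Rightarrow> real) (lam :: real).
      ((\<forall>z. 0 \<le> h z) \<and> convex_on UNIV h \<and> (\<forall>z. h (- z) = h z) \<and> lsc h
       \<and> (\<forall>z \<in> {x - y | x y. x \<in> X \<and> y \<in> Y}. h differentiable (at z))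
       \<and> lam > 0
       \<and> (\<forall>z \<in> {x - y | x y. x \<in> X \<and> y \<in> Y}.
             (if \<alpha> \<le> 1 then h z - h (x0 - y0) \<ge> lam * norm (z - (x0 - y0)) powr \<alpha>
              else h z - h (x0 - y0) \<ge> frechet_derivative h (at (x0 - y0)) (z - (x0 - y0))
                                       + lam * norm (z - (x0 - y0)) powr \<alpha>)))
      \<longrightarrow> (\<forall>n::nat. n \<ge> 1 \<longrightarrow>
            (SUP \<mu> \<in> prob_measures X. SUP \<nu> \<in> prob_measures Y.
               expected_OT_error (\<lambda>x y. h (x - y)) n \<mu> \<nu>)
            \<ge> ennreal (C * lam * real n powr (- \<alpha> / real DIM('a))))"
proof -
  obtain r where r: "r > 0" "ball x0 r \<subseteq> X" "ball y0 r \<subseteq> Y"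
    using x0 y0 by (rule common_ball_in_interiors)
  show ?thesis
  proof (intro exI[of _ "(r / (4 * real DIM('a))) powr \<alpha> / 2"] conjI allI impI, use r in simp)
    fix h :: "'a \<Rightarrow> real" and lam :: real and n :: nat
    let ?Z = "{x - y | x y. x \<in> X \<and> y \<in> Y}"
    assume H: "(\<forall>z. 0 \<le> h z) \<and> convex_on UNIV h \<and> (\<forall>z. h (- z) = h z) \<and> lsc h
      \<and> (\<forall>z\<in>?Z. h differentiable (at z)) \<and> lam > 0
      \<and> (\<forall>z\<in>?Z. if \<alpha> \<le> 1 then h z - h (x0 - y0) \<ge> lam * norm (z - (x0 - y0)) powr \<alpha>
          else h z - h (x0 - y0) \<ge> frechet_derivative h (at (x0 - y0)) (z - (x0 - y0))
            + lam * norm (z - (x0 - y0)) powr \<alpha>)"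
      and n: "n \<ge> 1"
    have "x0 - y0 \<in> ?Z" using x0 y0 interior_subset by blast
    then obtain L where L: "bounded_linear L"
      and growth: "\<And>z. z \<in> ?Z \<Longrightarrow> h (x0 - y0) + L (z - (x0 - y0)) + lam * norm (z - (x0 - y0)) powr \<alpha> \<le> h z"
      using H growth_condition_affine_minorant[of h "x0 - y0" ?Z \<alpha> lam] by blast
    have "continuous_on UNIV h" using H by (intro convex_on_continuous) auto
    from SUP_expected_OT_error_ge[OF r n L this _ _ alpha(1) growth] H
    show "ennreal ((r / (4 * real DIM('a))) powr \<alpha> / 2 * lam * real n powr (- \<alpha> / real DIM('a)))
      \<le> (SUP \<mu> \<in> prob_measures X. SUP \<nu> \<in> prob_measures Y. expected_OT_error (\<lambda>x y. h (x - y)) n \<mu> \<nu>)"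
      by fastforce
  qed
qed

end
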